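(* Let $\Omega,\Omega_1$ be prime ideals of $\mathcal S$ with tautological highest weights $\lambda=\lambda_\Omega$ and $\lambda_1=\lambda_{\Omega_1}$. (1) If $\Omega_1=v.\Omega$ with $v\in W^\lambda$, then $B_{\lambda_1}=vB_\lambda$. (2) If in addition $u\in W^{\lambda_1}$, then $uv\in W^\lambda$.
   Context: $F$ is an algebraically closed field of characteristic zero; $\mathfrak g$ is a semisimple Lie algebra over $F$ with Cartan subalgebra $\mathfrak h$, root system $R$, positive system $R^+$, Weyl group $W$, $\rho=\frac12\sum_{\alpha\in R^+}\alpha$, dot action $w.\xi=w(\xi+\rho)-\rho$; $H_\alpha$ is the coroot of $\alpha$. $\mathcal S=S(\mathfrak h)$ is identified with polynomial functions on $\mathfrak h^*$, with $(w.f)(\xi)=f(w^{-1}.\xi)$ and $w.\Omega=\{w.f:f\in\Omega\}$. For a prime $\Omega$, $\mathbb F$ is the fraction field of $\mathcal S/\Omega$ and $\lambda_\Omega$ the $\mathbb F$-linear extension of $\mathfrak h\hookrightarrow\mathcal S\to\mathcal S/\Omega\hookrightarrow\mathbb F$. For $\lambda=\lambda_\Omega$: $R_\lambda=\{\alpha\in R: H_\alpha-n\in\Omega\text{ for some }n\in\mathbb Z\}$, $R^+_\lambda=R^+\cap R_\lambda$, $B_\lambda$ the simple roots of $R_\lambda$ in $R^+_\lambda$, $W^\lambda=\{w\in W:w(B_\lambda)\subseteq R^+\}$. *)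

theory Defs
  imports "HOL-Computational_Algebra.Polynomial"
begin

definition alg_closed :: "'a::field_char_0 itself \<Rightarrow> bool" where
  "alg_closed _ \<longleftrightarrow> (\<forall>p::'a poly. degree p > 0 \<longrightarrow> (\<exists>x. poly p x = 0))"

text \<open>h* is modelled as coordinate vectors 'i \<Rightarrow> 'a over a finite index type 'i.\<close>
definition vadd :: "('i \<Rightarrow> 'a::field) \<Rightarrow> ('i \<Rightarrow> 'a) \<Rightarrow> 'i \<Rightarrow> 'a" where
  "vadd x y = (\<lambda>i. x i + y i)"

definition vsub :: "('i \<Rightarrow> 'a::field) \<Rightarrow> ('i \<Rightarrow> 'a) \<Rightarrow> 'i \<Rightarrow> 'a" where
  "vsub x y = (\<lambda>i. x i - y i)"

definition vscale :: "'a::field \<Rightarrow> ('i \<Rightarrow> 'a) \<Rightarrow> 'i \<Rightarrow> 'a" where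
  "vscale c x = (\<lambda>i. c * x i)"

definition lincomb :: "(('i \<Rightarrow> 'a::field) \<Rightarrow> 'a) \<Rightarrow> ('i \<Rightarrow> 'a) set \<Rightarrow> 'i \<Rightarrow> 'a" where
  "lincomb c B = (\<lambda>i. \<Sum>b\<in>B. c b * b i)"

definition lin_indep :: "('i \<Rightarrow> 'a::field) set \<Rightarrow> bool" where
  "lin_indep B \<longleftrightarrow> finite B \<and> (\<forall>c. lincomb c B = (\<lambda>_. 0) \<longrightarrow> (\<forall>b\<in>B. c b = 0))"

text \<open>Reflection in the root alpha, using the coroot H_alpha = cor alpha (a linear form on h*).\<close>
definition refl :: "(('i \<Rightarrow> 'a::field) \<Rightarrow> ('i \<Rightarrow> 'a) \<Rightarrow> 'a) \<Rightarrow> ('i \<Rightarrow> 'a) \<Rightarrow> ('i \<Rightarrow> 'a) \<Rightarrow> 'i \<Rightarrow> 'a" where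
  "refl cor \<alpha> \<xi> = vsub \<xi> (vscale (cor \<alpha> \<xi>) \<alpha>)"

text \<open>Reduced crystallographic root system R in h* spanning h*, with coroots cor.
  (These are exactly the root systems of semisimple Lie algebras over F.)\<close>
definition root_system :: "('i \<Rightarrow> 'a::field_char_0) set \<Rightarrow> (('i \<Rightarrow> 'a) \<Rightarrow> ('i \<Rightarrow> 'a) \<Rightarrow> 'a) \<Rightarrow> bool" where
  "root_system R cor \<longleftrightarrow>
     finite R \<and> (\<lambda>_. 0) \<notin> R \<and>
     (\<forall>\<xi>. \<exists>c. \<xi> = lincomb c R) \<and>
     (\<forall>\<alpha>\<in>R. (\<forall>x y. cor \<alpha> (vadd x y) = cor \<alpha> x + cor \<alpha> y) \<and>
              (\<forall>c x. cor \<alpha> (vscale c x) = c * cor \<alpha> x) \<and>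
              cor \<alpha> \<alpha> = 2) \<and>
     (\<forall>\<alpha>\<in>R. \<forall>\<beta>\<in>R. refl cor \<alpha> \<beta> \<in> R) \<and>
     (\<forall>\<alpha>\<in>R. \<forall>\<beta>\<in>R. \<exists>n::int. cor \<alpha> \<beta> = of_int n) \<and>
     (\<forall>\<alpha>\<in>R. \<forall>c. vscale c \<alpha> \<in> R \<longrightarrow> c = 1 \<or> c = -1)"

definition is_base :: "('i \<Rightarrow> 'a::field_char_0) set \<Rightarrow> ('i \<Rightarrow> 'a) set \<Rightarrow> bool" where
  "is_base R B \<longleftrightarrow> B \<subseteq> R \<and> lin_indep B \<and>
     (\<forall>\<alpha>\<in>R. \<exists>c::('i \<Rightarrow> 'a) \<Rightarrow> nat.
        \<alpha> = lincomb (\<lambda>b. of_nat (c b)) B \<or> \<alpha> = lincomb (\<lambda>b. - of_nat (c b)) B)"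

definition positive_system :: "('i \<Rightarrow> 'a::field_char_0) set \<Rightarrow> ('i \<Rightarrow> 'a) set \<Rightarrow> bool" where
  "positive_system R P \<longleftrightarrow> (\<exists>B. is_base R B \<and>
      P = {\<alpha>\<in>R. \<exists>c::('i \<Rightarrow> 'a) \<Rightarrow> nat. \<alpha> = lincomb (\<lambda>b. of_nat (c b)) B})"

definition rho :: "('i \<Rightarrow> 'a::field_char_0) set \<Rightarrow> 'i \<Rightarrow> 'a" where
  "rho P = (\<lambda>i. (\<Sum>\<alpha>\<in>P. \<alpha> i) / 2)"

inductive_set weyl :: "('i \<Rightarrow> 'a::field) set \<Rightarrow> (('i \<Rightarrow> 'a) \<Rightarrow> ('i \<Rightarrow> 'a) \<Rightarrow> 'a)
    \<Rightarrow> (('i \<Rightarrow> 'a) \<Rightarrow> ('i \<Rightarrow> 'a)) set"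
  for R cor where
  weyl_id: "id \<in> weyl R cor"
| weyl_step: "w \<in> weyl R cor \<Longrightarrow> \<alpha> \<in> R \<Longrightarrow> refl cor \<alpha> \<circ> w \<in> weyl R cor"

definition dot :: "('i \<Rightarrow> 'a::field_char_0) set \<Rightarrow> (('i \<Rightarrow> 'a) \<Rightarrow> ('i \<Rightarrow> 'a)) \<Rightarrow> ('i \<Rightarrow> 'a) \<Rightarrow> 'i \<Rightarrow> 'a" where
  "dot P w \<xi> = vsub (w (vadd \<xi> (rho P))) (rho P)"

definition dotf :: "('i \<Rightarrow> 'a::field_char_0) set \<Rightarrow> (('i \<Rightarrow> 'a) \<Rightarrow> ('i \<Rightarrow> 'a))
     \<Rightarrow> (('i \<Rightarrow> 'a) \<Rightarrow> 'a) \<Rightarrow> ('i \<Rightarrow> 'a) \<Rightarrow> 'a" where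
  "dotf P w f = (\<lambda>\<xi>. f (dot P (inv w) \<xi>))"

text \<open>S = S(h), identified with the polynomial functions on h*.\<close>
inductive_set polyfun :: "(('i \<Rightarrow> 'a::field) \<Rightarrow> 'a) set" where
  pf_const: "(\<lambda>_. c) \<in> polyfun"
| pf_coord: "(\<lambda>\<xi>. \<xi> i) \<in> polyfun"
| pf_add: "f \<in> polyfun \<Longrightarrow> g \<in> polyfun \<Longrightarrow> (\<lambda>\<xi>. f \<xi> + g \<xi>) \<in> polyfun"
| pf_mult: "f \<in> polyfun \<Longrightarrow> g \<in> polyfun \<Longrightarrow> (\<lambda>\<xi>. f \<xi> * g \<xi>) \<in> polyfun"

definition prime_ideal :: "(('i \<Rightarrow> 'a::field) \<Rightarrow> 'a) set \<Rightarrow> bool" where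
  "prime_ideal Q \<longleftrightarrow> Q \<subseteq> polyfun \<and> (\<lambda>_. 0) \<in> Q \<and>
     (\<forall>f\<in>Q. \<forall>g\<in>Q. (\<lambda>\<xi>. f \<xi> + g \<xi>) \<in> Q) \<and>
     (\<forall>f\<in>Q. \<forall>g\<in>polyfun. (\<lambda>\<xi>. g \<xi> * f \<xi>) \<in> Q) \<and>
     Q \<noteq> polyfun \<and>
     (\<forall>f\<in>polyfun. \<forall>g\<in>polyfun. (\<lambda>\<xi>. f \<xi> * g \<xi>) \<in> Q \<longrightarrow> f \<in> Q \<or> g \<in> Q)"

text \<open>R_lambda for lambda = lambda_Omega: roots alpha with H_alpha - n in Omega for some integer n.\<close>
definition integral_roots :: "('i \<Rightarrow> 'a::field_char_0) set \<Rightarrow> (('i \<Rightarrow> 'a) \<Rightarrow> ('i \<Rightarrow> 'a) \<Rightarrow> 'a)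
     \<Rightarrow> (('i \<Rightarrow> 'a) \<Rightarrow> 'a) set \<Rightarrow> ('i \<Rightarrow> 'a) set" where
  "integral_roots R cor Q = {\<alpha>\<in>R. \<exists>n::int. (\<lambda>\<xi>. cor \<alpha> \<xi> - of_int n) \<in> Q}"

definition simple_roots :: "('i \<Rightarrow> 'a::field) set \<Rightarrow> ('i \<Rightarrow> 'a) set" where
  "simple_roots Pos = {\<alpha>\<in>Pos. \<not> (\<exists>\<beta>\<in>Pos. \<exists>\<gamma>\<in>Pos. \<alpha> = vadd \<beta> \<gamma>)}"

definition B_lam :: "('i \<Rightarrow> 'a::field_char_0) set \<Rightarrow> (('i \<Rightarrow> 'a) \<Rightarrow> ('i \<Rightarrow> 'a) \<Rightarrow> 'a)
     \<Rightarrow> ('i \<Rightarrow> 'a) set \<Rightarrow> (('i \<Rightarrow> 'a) \<Rightarrow> 'a) set \<Rightarrow> ('i \<Rightarrow> 'a) set" where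
  "B_lam R cor P Q = simple_roots (P \<inter> integral_roots R cor Q)"

definition W_lam :: "('i \<Rightarrow> 'a::field_char_0) set \<Rightarrow> (('i \<Rightarrow> 'a) \<Rightarrow> ('i \<Rightarrow> 'a) \<Rightarrow> 'a)
     \<Rightarrow> ('i \<Rightarrow> 'a) set \<Rightarrow> (('i \<Rightarrow> 'a) \<Rightarrow> 'a) set \<Rightarrow> (('i \<Rightarrow> 'a) \<Rightarrow> ('i \<Rightarrow> 'a)) set" where
  "W_lam R cor P Q = {w \<in> weyl R cor. w ` B_lam R cor P Q \<subseteq> P}"

end

theory Submission
  imports Defs
begin

text \<open>A Weyl group element \<open>v\<close> preserves the pairing of roots and coroots, and
  \<open>\<rho> - v\<rho>\<close> pairs integrally with every coroot. Hence the dot action of \<open>v\<close> carries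
  \<open>H\<^sub>\<gamma> - n\<close> to \<open>H\<^sub>v\<^sub>\<gamma> - m\<close> with \<open>m\<close> an integer, and \<open>v\<close> maps \<open>R\<^sub>\<lambda>\<close> onto \<open>R\<^sub>\<lambda>\<^sub>1\<close>.
  Every non-simple element of \<open>R\<^sub>\<lambda>\<^sup>+\<close> is a sum of two elements of smaller height,
  so from \<open>vB\<^sub>\<lambda> \<subseteq> R\<^sup>+\<close> we get \<open>vR\<^sub>\<lambda>\<^sup>+ \<subseteq> R\<^sup>+\<close>, and as \<open>R\<^sub>\<lambda> = -R\<^sub>\<lambda>\<close> in fact
  \<open>vR\<^sub>\<lambda>\<^sup>+ = R\<^sub>\<lambda>\<^sub>1\<^sup>+\<close>. A linear bijection preserves indecomposability, which gives
  \<open>B\<^sub>\<lambda>\<^sub>1 = vB\<^sub>\<lambda>\<close>; then \<open>(uv)B\<^sub>\<lambda> = uB\<^sub>\<lambda>\<^sub>1 \<subseteq> R\<^sup>+\<close>.\<close>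

section \<open>Linear algebra on coordinate vectors\<close>

definition vneg :: "('i \<Rightarrow> 'a::field) \<Rightarrow> 'i \<Rightarrow> 'a" where
  "vneg x = (\<lambda>i. - x i)"

definition lin_form :: "(('i \<Rightarrow> 'a::field) \<Rightarrow> 'a) \<Rightarrow> bool" where
  "lin_form f \<longleftrightarrow> (\<forall>x y. f (vadd x y) = f x + f y) \<and> (\<forall>c x. f (vscale c x) = c * f x)"

definition lin_map :: "(('i \<Rightarrow> 'a::field) \<Rightarrow> ('i \<Rightarrow> 'a)) \<Rightarrow> bool" where
  "lin_map w \<longleftrightarrow>
     (\<forall>x y. w (vadd x y) = vadd (w x) (w y)) \<and> (\<forall>c x. w (vscale c x) = vscale c (w x))"

lemma vsub_eq_vadd_vscale: "vsub x y = vadd x (vscale (-1) y)"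
  by (simp add: vsub_def vadd_def vscale_def)

lemma vneg_eq_vscale: "vneg x = vscale (-1) x"
  by (simp add: vneg_def vscale_def)

lemma vneg_vneg [simp]: "vneg (vneg x) = x"
  by (simp add: vneg_def)

lemma vneg_eq_iff [simp]: "vneg x = vneg y \<longleftrightarrow> x = y"
  by (metis vneg_vneg)

lemma vsub_vadd_cancel [simp]: "vsub (vadd y r) r = y"
  and vadd_vsub_cancel [simp]: "vadd (vsub y r) r = y"
  by (simp_all add: vadd_def vsub_def)

lemma lin_formD:
  assumes "lin_form f"
  shows lin_form_vadd: "f (vadd x y) = f x + f y"
    and lin_form_vscale: "f (vscale c x) = c * f x"
  using assms by (simp_all add: lin_form_def)

lemma lin_mapD:
  assumes "lin_map w"
  shows lin_map_vadd: "w (vadd x y) = vadd (w x) (w y)"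
    and lin_map_vscale: "w (vscale c x) = vscale c (w x)"
  using assms by (simp_all add: lin_map_def)

lemma lin_form_zero: "lin_form f \<Longrightarrow> f (\<lambda>_. 0) = 0"
  using lin_form_vscale[of f 0 "\<lambda>_. 0"] by (simp add: vscale_def)

lemma lin_form_vsub: "lin_form f \<Longrightarrow> f (vsub x y) = f x - f y"
  by (simp add: vsub_eq_vadd_vscale lin_formD)

lemma lin_form_vneg: "lin_form f \<Longrightarrow> f (vneg x) = - f x"
  by (simp add: vneg_eq_vscale lin_formD)

lemma lin_map_vsub: "lin_map w \<Longrightarrow> w (vsub x y) = vsub (w x) (w y)"
  by (simp add: vsub_eq_vadd_vscale lin_mapD)

lemma lin_map_vneg: "lin_map w \<Longrightarrow> w (vneg x) = vneg (w x)"
  by (simp add: vneg_eq_vscale lin_mapD)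

lemma lin_form_comp: "lin_form f \<Longrightarrow> lin_map w \<Longrightarrow> lin_form (\<lambda>x. f (w x))"
  by (simp add: lin_form_def lin_map_def)

lemma lin_map_comp: "lin_map v \<Longrightarrow> lin_map w \<Longrightarrow> lin_map (v \<circ> w)"
  by (simp add: lin_map_def)

lemma lin_form_lincomb:
  assumes "lin_form f" and "finite B"
  shows "f (lincomb k B) = (\<Sum>b\<in>B. k b * f b)"
  using \<open>finite B\<close>
proof (induction B rule: finite_induct)
  case empty
  then show ?case using lin_form_zero[OF assms(1)] by (simp add: lincomb_def)
next
  case (insert x F)
  then have "lincomb k (insert x F) = vadd (vscale (k x) x) (lincomb k F)"
    by (simp add: lincomb_def vadd_def vscale_def)
  with insert show ?case using assms(1) by (simp add: lin_formD)
qed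

lemma lincomb_add: "lincomb (\<lambda>b. f b + g b) B = vadd (lincomb f B) (lincomb g B)"
  by (simp add: lincomb_def vadd_def sum.distrib ring_distribs)

lemma lincomb_uminus: "lincomb (\<lambda>b. - f b) B = vneg (lincomb f B)"
  by (simp add: lincomb_def vneg_def sum_negf)

lemma lincomb_zero: "lincomb (\<lambda>_. 0) B = (\<lambda>_. 0)"
  by (simp add: lincomb_def)

lemma lin_indep_lincomb_eq:
  assumes "lin_indep B" and "lincomb f B = lincomb g B" and "b \<in> B"
  shows "f b = g b"
proof -
  have "lincomb (\<lambda>b. f b - g b) B = (\<lambda>_. 0)"
    using assms(2) by (auto simp: lincomb_def sum_subtractf left_diff_distrib fun_eq_iff)
  then show ?thesis using assms(1,3) unfolding lin_indep_def by auto
qed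

section \<open>Root systems and their coroots\<close>

lemma root_systemD:
  assumes "root_system R cor"
  shows root_system_finite: "finite R"
    and zero_notin_roots: "(\<lambda>_. 0) \<notin> R"
    and roots_span: "\<exists>c. \<xi> = lincomb c R"
    and coroot_lin_form: "\<alpha> \<in> R \<Longrightarrow> lin_form (cor \<alpha>)"
    and coroot_self: "\<alpha> \<in> R \<Longrightarrow> cor \<alpha> \<alpha> = 2"
    and refl_in_roots: "\<alpha> \<in> R \<Longrightarrow> \<beta> \<in> R \<Longrightarrow> refl cor \<alpha> \<beta> \<in> R"
  using assms unfolding root_system_def lin_form_def by auto

lemma coroot_Ints: "root_system R cor \<Longrightarrow> \<alpha> \<in> R \<Longrightarrow> \<beta> \<in> R \<Longrightarrow> cor \<alpha> \<beta> \<in> \<int>"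
  unfolding root_system_def by (metis Ints_of_int)

lemma refl_lin_map: "root_system R cor \<Longrightarrow> \<alpha> \<in> R \<Longrightarrow> lin_map (refl cor \<alpha>)"
  using coroot_lin_form[of R cor \<alpha>]
  by (simp add: lin_map_def lin_form_def refl_def vsub_def vadd_def vscale_def fun_eq_iff
      algebra_simps)

lemma refl_refl [simp]:
  assumes "root_system R cor" and "\<alpha> \<in> R"
  shows "refl cor \<alpha> (refl cor \<alpha> x) = x"
proof -
  note lin = coroot_lin_form[OF assms]
  have "cor \<alpha> (refl cor \<alpha> x) = - cor \<alpha> x"
    using coroot_self[OF assms] by (simp add: refl_def lin_form_vsub[OF lin] lin_form_vscale[OF lin])
  then show ?thesis by (simp add: refl_def vsub_def vscale_def fun_eq_iff)
qed

lemma refl_self: "root_system R cor \<Longrightarrow> \<alpha> \<in> R \<Longrightarrow> refl cor \<alpha> \<alpha> = vneg \<alpha>"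
  using coroot_self[of R cor \<alpha>]
  by (simp add: refl_def vsub_def vscale_def vneg_def fun_eq_iff algebra_simps)

lemma vneg_in_roots: "root_system R cor \<Longrightarrow> \<alpha> \<in> R \<Longrightarrow> vneg \<alpha> \<in> R"
  by (metis refl_self refl_in_roots)

lemma transvection_stable_finite_vanishes:
  fixes g :: "('i \<Rightarrow> 'a::field_char_0) \<Rightarrow> 'a"
  assumes "finite R" and "lin_form g" and "g \<gamma> = 0" and "\<gamma> \<noteq> (\<lambda>_. 0)"
    and stable: "\<And>\<rho>. \<rho> \<in> R \<Longrightarrow> vadd \<rho> (vscale (g \<rho>) \<gamma>) \<in> R"
    and "\<rho> \<in> R"
  shows "g \<rho> = 0"
proof (rule ccontr)
  assume nz: "g \<rho> \<noteq> 0"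
  define h where "h n = vadd \<rho> (vscale (of_nat n * g \<rho>) \<gamma>)" for n :: nat
  have "h n \<in> R" for n
  proof (induction n)
    case 0
    then show ?case using \<open>\<rho> \<in> R\<close> by (simp add: h_def vadd_def vscale_def)
  next
    case (Suc n)
    have "g (h n) = g \<rho>"
      using assms(3) by (simp add: h_def lin_formD[OF assms(2)])
    then have "h (Suc n) = vadd (h n) (vscale (g (h n)) \<gamma>)"
      by (simp add: h_def vadd_def vscale_def fun_eq_iff algebra_simps)
    then show ?case using stable[OF Suc] by simp
  qed
  then have "finite (range h)"
    using \<open>finite R\<close> by (auto intro: finite_subset)
  moreover have "inj h"
  proof (rule injI)
    fix n m assume "h n = h m"
    obtain i where "\<gamma> i \<noteq> 0" using \<open>\<gamma> \<noteq> (\<lambda>_. 0)\<close> by auto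
    moreover have "(of_nat n - of_nat m) * (g \<rho> * \<gamma> i) = (0::'a)"
      using fun_cong[OF \<open>h n = h m\<close>, of i] by (simp add: h_def vadd_def vscale_def algebra_simps)
    ultimately show "n = m" using nz by simp
  qed
  ultimately show False using finite_imageD by (metis infinite_UNIV_nat)
qed

lemma coroot_unique:
  assumes rs: "root_system R cor" and "\<gamma> \<in> R" and "lin_form c" and "c \<gamma> = 2"
    and stable: "\<And>\<rho>. \<rho> \<in> R \<Longrightarrow> vsub \<rho> (vscale (c \<rho>) \<gamma>) \<in> R"
  shows "c = cor \<gamma>"
proof -
  define g where "g y = c y - cor \<gamma> y" for y
  have lin_g: "lin_form g"
    using \<open>lin_form c\<close> coroot_lin_form[OF rs \<open>\<gamma> \<in> R\<close>]
    by (simp add: lin_form_def g_def algebra_simps)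
  have g_\<gamma>: "g \<gamma> = 0"
    using \<open>c \<gamma> = 2\<close> coroot_self[OF rs \<open>\<gamma> \<in> R\<close>] by (simp add: g_def)
  have \<gamma>_nonzero: "\<gamma> \<noteq> (\<lambda>_. 0)"
    using zero_notin_roots[OF rs] \<open>\<gamma> \<in> R\<close> by blast
  have stable_g: "vadd \<rho> (vscale (g \<rho>) \<gamma>) \<in> R" if "\<rho> \<in> R" for \<rho>
  proof -
    note lin_cor = coroot_lin_form[OF rs \<open>\<gamma> \<in> R\<close>]
    have pairing: "cor \<gamma> (vsub \<rho> (vscale (c \<rho>) \<gamma>)) = cor \<gamma> \<rho> - 2 * c \<rho>"
      using coroot_self[OF rs \<open>\<gamma> \<in> R\<close>]
      by (simp add: lin_form_vsub[OF lin_cor] lin_form_vscale[OF lin_cor])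
    have "refl cor \<gamma> (vsub \<rho> (vscale (c \<rho>) \<gamma>)) = vadd \<rho> (vscale (g \<rho>) \<gamma>)"
      unfolding refl_def pairing by (simp add: g_def vsub_def vadd_def vscale_def fun_eq_iff algebra_simps)
    then show ?thesis using refl_in_roots[OF rs \<open>\<gamma> \<in> R\<close> stable[OF that]] by simp
  qed
  have "g \<rho> = 0" if "\<rho> \<in> R" for \<rho>
    using transvection_stable_finite_vanishes[OF root_system_finite[OF rs] lin_g g_\<gamma> \<gamma>_nonzero
        stable_g that] .
  then have "g y = 0" for y
    using roots_span[OF rs, of y] lin_form_lincomb[OF lin_g root_system_finite[OF rs]] by auto
  then show ?thesis by (auto simp: g_def)
qed

lemma coroot_refl:
  assumes rs: "root_system R cor" and "\<alpha> \<in> R" and "\<delta> \<in> R"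
  shows "cor (refl cor \<alpha> \<delta>) (refl cor \<alpha> x) = cor \<delta> x"
proof -
  have "(\<lambda>y. cor \<delta> (refl cor \<alpha> y)) = cor (refl cor \<alpha> \<delta>)"
  proof (rule coroot_unique[OF rs refl_in_roots[OF rs \<open>\<alpha> \<in> R\<close> \<open>\<delta> \<in> R\<close>]])
    show "lin_form (\<lambda>y. cor \<delta> (refl cor \<alpha> y))"
      using coroot_lin_form[OF rs \<open>\<delta> \<in> R\<close>] refl_lin_map[OF rs \<open>\<alpha> \<in> R\<close>] by (rule lin_form_comp)
    show "cor \<delta> (refl cor \<alpha> (refl cor \<alpha> \<delta>)) = 2"
      using assms by (simp add: coroot_self)
  next
    fix \<rho> assume "\<rho> \<in> R"
    have "vsub \<rho> (vscale (cor \<delta> (refl cor \<alpha> \<rho>)) (refl cor \<alpha> \<delta>))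
        = refl cor \<alpha> (refl cor \<delta> (refl cor \<alpha> \<rho>))"
      using assms by (simp add: refl_def [of cor \<delta>] lin_map_vsub lin_map_vscale refl_lin_map)
    then show "vsub \<rho> (vscale (cor \<delta> (refl cor \<alpha> \<rho>)) (refl cor \<alpha> \<delta>)) \<in> R"
      using assms \<open>\<rho> \<in> R\<close> by (simp add: refl_in_roots)
  qed
  then show ?thesis using assms by (metis refl_refl)
qed

lemma coroot_vneg:
  assumes rs: "root_system R cor" and "\<alpha> \<in> R"
  shows "cor (vneg \<alpha>) = (\<lambda>y. - cor \<alpha> y)"
proof (rule coroot_unique[OF rs vneg_in_roots[OF assms], symmetric])
  note lin = coroot_lin_form[OF assms]
  show "lin_form (\<lambda>y. - cor \<alpha> y)"
    using lin by (simp add: lin_form_def)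
  show "- cor \<alpha> (vneg \<alpha>) = 2"
    using coroot_self[OF assms] by (simp add: lin_form_vneg[OF lin])
next
  fix \<rho> assume "\<rho> \<in> R"
  have "vsub \<rho> (vscale (- cor \<alpha> \<rho>) (vneg \<alpha>)) = refl cor \<alpha> \<rho>"
    by (simp add: refl_def vsub_def vscale_def vneg_def)
  then show "vsub \<rho> (vscale (- cor \<alpha> \<rho>) (vneg \<alpha>)) \<in> R"
    using refl_in_roots[OF assms \<open>\<rho> \<in> R\<close>] by simp
qed

section \<open>The Weyl group\<close>

lemma weyl_comp: "u \<in> weyl R cor \<Longrightarrow> v \<in> weyl R cor \<Longrightarrow> u \<circ> v \<in> weyl R cor"
proof (induction rule: weyl.induct)
  case (weyl_step w \<alpha>)
  then show ?case by (metis weyl.weyl_step comp_assoc)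
qed simp

context
  fixes R :: "('i \<Rightarrow> 'a::field_char_0) set" and cor
  assumes rs: "root_system R cor"
begin

lemma weyl_lin_map: "w \<in> weyl R cor \<Longrightarrow> lin_map w"
proof (induction rule: weyl.induct)
  case weyl_id
  then show ?case by (simp add: lin_map_def)
next
  case (weyl_step w \<alpha>)
  then show ?case using lin_map_comp refl_lin_map[OF rs] by blast
qed

lemma weyl_bij: "w \<in> weyl R cor \<Longrightarrow> bij w"
proof (induction rule: weyl.induct)
  case weyl_id
  show ?case by (rule bij_id)
next
  case (weyl_step w \<alpha>)
  have "bij (refl cor \<alpha>)"
    using refl_refl[OF rs \<open>\<alpha> \<in> R\<close>] by (intro o_bij[of "refl cor \<alpha>"]) (auto simp: fun_eq_iff)
  with weyl_step.IH show ?case by (rule bij_comp)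
qed

lemma weyl_in_roots: "w \<in> weyl R cor \<Longrightarrow> \<gamma> \<in> R \<Longrightarrow> w \<gamma> \<in> R"
  by (induction rule: weyl.induct) (simp_all add: refl_in_roots[OF rs])

lemma weyl_image_roots: "w \<in> weyl R cor \<Longrightarrow> w ` R = R"
  by (intro endo_inj_surj root_system_finite[OF rs])
    (auto simp: weyl_in_roots intro: inj_on_subset bij_is_inj weyl_bij)

lemma weyl_coroot: "w \<in> weyl R cor \<Longrightarrow> \<gamma> \<in> R \<Longrightarrow> cor (w \<gamma>) (w x) = cor \<gamma> x"
  by (induction arbitrary: \<gamma> rule: weyl.induct)
    (simp_all add: coroot_refl[OF rs] weyl_in_roots)

lemma weyl_coroot_inv: "w \<in> weyl R cor \<Longrightarrow> \<gamma> \<in> R \<Longrightarrow> cor \<gamma> (inv w y) = cor (w \<gamma>) y"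
  using weyl_coroot[of w \<gamma> "inv w y"] weyl_bij[of w] by (simp add: bij_is_surj surj_f_inv_f)

end

section \<open>The dot action\<close>

lemma dotf_coroot:
  assumes rs: "root_system R cor" and "w \<in> weyl R cor" and "\<gamma> \<in> R"
  shows "dotf P w (\<lambda>\<xi>. cor \<gamma> \<xi> - c)
    = (\<lambda>\<xi>. cor (w \<gamma>) \<xi> - (c - (cor (w \<gamma>) (rho P) - cor \<gamma> (rho P))))"
proof
  fix \<xi>
  note lin = coroot_lin_form[OF rs \<open>\<gamma> \<in> R\<close>]
    and lin_w = coroot_lin_form[OF rs weyl_in_roots[OF rs assms(2,3)]]
  show "dotf P w (\<lambda>\<xi>. cor \<gamma> \<xi> - c) \<xi>
      = cor (w \<gamma>) \<xi> - (c - (cor (w \<gamma>) (rho P) - cor \<gamma> (rho P)))"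
    using assms by (simp add: dotf_def dot_def lin_form_vsub[OF lin] lin_form_vadd[OF lin_w]
        weyl_coroot_inv)
qed

lemma inj_dotf:
  assumes "inj w"
  shows "inj (dotf P w)"
proof (rule injI)
  fix f g assume eq: "dotf P w f = dotf P w g"
  show "f = g"
  proof
    fix \<eta>
    have "dot P (inv w) (dot P w \<eta>) = \<eta>"
      using assms by (simp add: dot_def)
    then show "f \<eta> = g \<eta>"
      using fun_cong[OF eq, of "dot P w \<eta>"] by (simp add: dotf_def)
  qed
qed

section \<open>Positive systems\<close>

locale based_positive_system =
  fixes R :: "('i \<Rightarrow> 'a::field_char_0) set" and cor and P and B
  assumes root_system: "root_system R cor"
    and base: "is_base R B"
    and pos_def: "P = {\<alpha>\<in>R. \<exists>c::('i \<Rightarrow> 'a) \<Rightarrow> nat. \<alpha> = lincomb (\<lambda>b. of_nat (c b)) B}"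
begin

lemma lin_indep_base: "lin_indep B"
  using base by (simp add: is_base_def)

lemma pos_subset_roots: "P \<subseteq> R"
  using pos_def by auto

lemma finite_pos: "finite P"
  using pos_subset_roots root_system_finite[OF root_system] by (rule finite_subset)

lemma pos_coeffs: "\<alpha> \<in> P \<Longrightarrow> \<exists>c::('i \<Rightarrow> 'a) \<Rightarrow> nat. \<alpha> = lincomb (\<lambda>b. of_nat (c b)) B"
  using pos_def by auto

lemma lincomb_of_nat_eq:
  assumes "lincomb (\<lambda>b. of_nat (c b)) B = lincomb (\<lambda>b. of_nat (d b)) B" and "b \<in> B"
  shows "c b = d b"
  using lin_indep_lincomb_eq[OF lin_indep_base assms] by simp

lemma coeff_sum_vadd:
  assumes "vadd \<beta> \<gamma> = lincomb (\<lambda>b. of_nat (c b)) B"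
    and "\<beta> = lincomb (\<lambda>b. of_nat (d b)) B" and "\<gamma> = lincomb (\<lambda>b. of_nat (e b)) B"
  shows "sum c B = sum d B + sum e B"
proof -
  have coeffs: "lincomb (\<lambda>b. of_nat (c b)) B = lincomb (\<lambda>b. of_nat (d b + e b)) B"
    using assms by (simp add: lincomb_add)
  have "c b = d b + e b" if "b \<in> B" for b
    using lincomb_of_nat_eq[OF coeffs that] .
  then show ?thesis
    by (simp add: sum.distrib[symmetric])
qed

lemma pos_coeff_sum_pos:
  assumes "\<alpha> \<in> P" and "\<alpha> = lincomb (\<lambda>b. of_nat (c b)) B"
  shows "0 < sum c B"
proof (rule ccontr)
  assume "\<not> 0 < sum c B"
  then have "\<alpha> = lincomb (\<lambda>_. 0) B"
    using assms(2) lin_indep_base by (simp add: lin_indep_def lincomb_def)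
  then show False
    using assms(1) pos_subset_roots zero_notin_roots[OF root_system] by (auto simp: lincomb_zero)
qed

lemma pos_or_vneg_pos:
  assumes "\<alpha> \<in> R"
  shows "\<alpha> \<in> P \<or> vneg \<alpha> \<in> P"
proof -
  obtain c :: "('i \<Rightarrow> 'a) \<Rightarrow> nat" where
    "\<alpha> = lincomb (\<lambda>b. of_nat (c b)) B \<or> \<alpha> = lincomb (\<lambda>b. - of_nat (c b)) B"
    using base assms unfolding is_base_def by blast
  then have "\<alpha> = lincomb (\<lambda>b. of_nat (c b)) B \<or> vneg \<alpha> = lincomb (\<lambda>b. of_nat (c b)) B"
    by (auto simp: lincomb_uminus)
  then show ?thesis
    using assms vneg_in_roots[OF root_system] unfolding pos_def by blast
qed

lemma vneg_pos_notin:
  assumes "\<alpha> \<in> P"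
  shows "vneg \<alpha> \<notin> P"
proof
  assume "vneg \<alpha> \<in> P"
  obtain c d :: "('i \<Rightarrow> 'a) \<Rightarrow> nat" where
    c: "\<alpha> = lincomb (\<lambda>b. of_nat (c b)) B" and d: "vneg \<alpha> = lincomb (\<lambda>b. of_nat (d b)) B"
    using pos_coeffs assms \<open>vneg \<alpha> \<in> P\<close> by blast
  have "lincomb (\<lambda>b. of_nat (c b + d b)) B
      = vadd (lincomb (\<lambda>b. of_nat (c b)) B) (lincomb (\<lambda>b. of_nat (d b)) B)"
    by (simp add: lincomb_add)
  also have "\<dots> = vadd \<alpha> (vneg \<alpha>)"
    by (simp only: c[symmetric] d[symmetric])
  also have "\<dots> = lincomb (\<lambda>b. of_nat 0) B"
    by (simp add: lincomb_zero vadd_def vneg_def)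
  finally have "c b = 0" if "b \<in> B" for b
    using lincomb_of_nat_eq[of "\<lambda>b. c b + d b" "\<lambda>_. 0"] that by simp
  then show False
    using pos_coeff_sum_pos[OF assms c] by simp
qed

lemma pos_vadd:
  assumes "\<alpha> \<in> P" and "\<beta> \<in> P" and "vadd \<alpha> \<beta> \<in> R"
  shows "vadd \<alpha> \<beta> \<in> P"
proof -
  obtain c d :: "('i \<Rightarrow> 'a) \<Rightarrow> nat" where
    "\<alpha> = lincomb (\<lambda>b. of_nat (c b)) B" and "\<beta> = lincomb (\<lambda>b. of_nat (d b)) B"
    using pos_coeffs assms(1,2) by blast
  then have "vadd \<alpha> \<beta> = lincomb (\<lambda>b. of_nat (c b + d b)) B"
    by (simp add: lincomb_add)
  then show ?thesis
    using assms(3) unfolding pos_def by (blast intro: exI[of _ "\<lambda>b. c b + d b"])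
qed

lemma pos_height_induct:
  assumes "Q \<subseteq> P" and "\<alpha> \<in> Q"
    and simple: "\<And>\<alpha>. \<alpha> \<in> simple_roots Q \<Longrightarrow> X \<alpha>"
    and add: "\<And>\<beta> \<gamma>. \<beta> \<in> Q \<Longrightarrow> \<gamma> \<in> Q \<Longrightarrow> vadd \<beta> \<gamma> \<in> Q \<Longrightarrow> X \<beta> \<Longrightarrow> X \<gamma> \<Longrightarrow> X (vadd \<beta> \<gamma>)"
  shows "X \<alpha>"
proof -
  have "X \<alpha>" if "\<alpha> \<in> Q" and "\<alpha> = lincomb (\<lambda>b. of_nat (c b)) B"
    for \<alpha> and c :: "('i \<Rightarrow> 'a) \<Rightarrow> nat"
    using that
  proof (induction "sum c B" arbitrary: \<alpha> c rule: less_induct)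
    case less
    show ?case
    proof (cases "\<alpha> \<in> simple_roots Q")
      case True
      then show ?thesis by (rule simple)
    next
      case False
      then obtain \<beta> \<gamma> where "\<beta> \<in> Q" "\<gamma> \<in> Q" and \<alpha>_eq: "\<alpha> = vadd \<beta> \<gamma>"
        using less.prems(1) unfolding simple_roots_def by blast
      moreover obtain d e :: "('i \<Rightarrow> 'a) \<Rightarrow> nat" where
        d: "\<beta> = lincomb (\<lambda>b. of_nat (d b)) B" and e: "\<gamma> = lincomb (\<lambda>b. of_nat (e b)) B"
        using pos_coeffs \<open>Q \<subseteq> P\<close> \<open>\<beta> \<in> Q\<close> \<open>\<gamma> \<in> Q\<close> by blast
      moreover have "sum c B = sum d B + sum e B"
        using coeff_sum_vadd less.prems(2) \<alpha>_eq d e by simp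
      moreover have "0 < sum d B" "0 < sum e B"
        using pos_coeff_sum_pos \<open>Q \<subseteq> P\<close> \<open>\<beta> \<in> Q\<close> \<open>\<gamma> \<in> Q\<close> d e by auto
      ultimately show ?thesis
        using less.hyps[of d \<beta>] less.hyps[of e \<gamma>] less.prems(1) add by simp
    qed
  qed
  then show ?thesis using pos_coeffs assms(1,2) by blast
qed

lemma weyl_sign_perm:
  assumes "w \<in> weyl R cor"
  shows "bij_betw (\<lambda>\<alpha>. if w \<alpha> \<in> P then w \<alpha> else vneg (w \<alpha>)) P P"
    (is "bij_betw ?\<phi> P P")
proof -
  have w_vneg: "vneg (w x) = w (vneg x)" for x
    using lin_map_vneg[OF weyl_lin_map[OF root_system assms]] by simp
  have inj_w: "inj w"
    using weyl_bij[OF root_system assms] by (rule bij_is_inj)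
  have "?\<phi> ` P \<subseteq> P"
    using pos_or_vneg_pos weyl_in_roots[OF root_system assms] pos_subset_roots by auto
  moreover have "inj_on ?\<phi> P"
    using vneg_pos_notin by (auto intro!: inj_onI simp: w_vneg inj_eq[OF inj_w] split: if_splits)
  ultimately show ?thesis
    by (intro bij_betw_imageI endo_inj_surj[OF finite_pos])
qed

text \<open>Reindexing \<open>\<rho> = (\<Sum>P) / 2\<close> along \<open>weyl_sign_perm\<close> shows that \<open>\<rho> - w\<rho>\<close> is the sum
  of the roots \<open>-w\<alpha>\<close> over those \<open>\<alpha> \<in> P\<close> with \<open>w\<alpha> \<notin> P\<close>.\<close>

lemma coroot_rho_diff_Ints:
  assumes "w \<in> weyl R cor" and "\<beta> \<in> R"
  shows "cor \<beta> (rho P) - cor \<beta> (w (rho P)) \<in> \<int>"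
proof -
  define \<phi> where "\<phi> \<alpha> = (if w \<alpha> \<in> P then w \<alpha> else vneg (w \<alpha>))" for \<alpha>
  note lin = coroot_lin_form[OF root_system \<open>\<beta> \<in> R\<close>]
  have rho_lincomb: "rho P = lincomb (\<lambda>_. 1/2) P"
    by (simp add: rho_def lincomb_def fun_eq_iff sum_divide_distrib)
  have "cor \<beta> (rho P) = (\<Sum>\<alpha>\<in>P. cor \<beta> \<alpha> / 2)"
    using lin_form_lincomb[OF lin finite_pos] rho_lincomb by simp
  also have "\<dots> = (\<Sum>\<alpha>\<in>P. cor \<beta> (\<phi> \<alpha>) / 2)"
    using sum.reindex_bij_betw[OF weyl_sign_perm[OF assms(1)], of "\<lambda>\<alpha>. cor \<beta> \<alpha> / 2"]
    by (simp add: \<phi>_def)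
  finally have "cor \<beta> (rho P) - cor \<beta> (w (rho P))
      = (\<Sum>\<alpha>\<in>P. cor \<beta> (\<phi> \<alpha>) / 2) - (\<Sum>\<alpha>\<in>P. cor \<beta> (w \<alpha>) / 2)"
    using lin_form_lincomb[OF lin_form_comp[OF lin weyl_lin_map[OF root_system assms(1)]]
        finite_pos] rho_lincomb by simp
  also have "\<dots> = (\<Sum>\<alpha>\<in>P. if w \<alpha> \<in> P then 0 else cor \<beta> (\<phi> \<alpha>))"
    unfolding sum_subtractf[symmetric] by (rule sum.cong) (simp_all add: \<phi>_def lin_form_vneg[OF lin])
  also have "\<dots> \<in> \<int>"
  proof (intro Ints_sum)
    fix \<alpha> assume "\<alpha> \<in> P"
    then have "\<phi> \<alpha> \<in> P"
      using bij_betwE[OF weyl_sign_perm[OF assms(1)]] unfolding \<phi>_def by blast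
    then have "\<phi> \<alpha> \<in> R"
      using pos_subset_roots by blast
    then show "(if w \<alpha> \<in> P then 0 else cor \<beta> (\<phi> \<alpha>)) \<in> \<int>"
      using coroot_Ints[OF root_system \<open>\<beta> \<in> R\<close>] by simp
  qed
  finally show ?thesis .
qed

lemma image_pos_subset_pos:
  assumes add: "\<And>x y. v (vadd x y) = vadd (v x) (v y)"
    and roots: "\<And>\<gamma>. \<gamma> \<in> R \<Longrightarrow> v \<gamma> \<in> R"
    and simple: "v ` simple_roots (P \<inter> X) \<subseteq> P"
  shows "v ` (P \<inter> X) \<subseteq> P"
proof (rule image_subsetI)
  fix \<alpha> assume "\<alpha> \<in> P \<inter> X"
  show "v \<alpha> \<in> P"
  proof (rule pos_height_induct[of "P \<inter> X" \<alpha> "\<lambda>\<alpha>. v \<alpha> \<in> P"])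
    show "P \<inter> X \<subseteq> P" "\<alpha> \<in> P \<inter> X"
      using \<open>\<alpha> \<in> P \<inter> X\<close> by auto
    show "v \<alpha>' \<in> P" if "\<alpha>' \<in> simple_roots (P \<inter> X)" for \<alpha>'
      using simple that by blast
  next
    fix \<beta> \<gamma> assume "\<beta> \<in> P \<inter> X" "\<gamma> \<in> P \<inter> X" "vadd \<beta> \<gamma> \<in> P \<inter> X" "v \<beta> \<in> P" "v \<gamma> \<in> P"
    moreover have "v (vadd \<beta> \<gamma>) \<in> R"
      using roots \<open>vadd \<beta> \<gamma> \<in> P \<inter> X\<close> pos_subset_roots by blast
    ultimately show "v (vadd \<beta> \<gamma>) \<in> P"
      unfolding add by (blast intro: pos_vadd)
  qed
qed

lemma image_pos_eq:
  assumes neg: "\<And>x. v (vneg x) = vneg (v x)" and "X \<subseteq> R"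
    and X_neg: "\<And>\<alpha>. \<alpha> \<in> X \<Longrightarrow> vneg \<alpha> \<in> X"
    and "v ` (P \<inter> X) \<subseteq> P"
  shows "v ` (P \<inter> X) = P \<inter> v ` X"
proof
  show "v ` (P \<inter> X) \<subseteq> P \<inter> v ` X"
    using assms(4) by blast
next
  show "P \<inter> v ` X \<subseteq> v ` (P \<inter> X)"
  proof
    fix \<beta> assume "\<beta> \<in> P \<inter> v ` X"
    then obtain \<alpha> where "\<alpha> \<in> X" "\<beta> = v \<alpha>" "\<beta> \<in> P" by blast
    have "\<alpha> \<in> P"
    proof (rule ccontr)
      assume "\<alpha> \<notin> P"
      then have "vneg \<alpha> \<in> P \<inter> X"
        using pos_or_vneg_pos[of \<alpha>] \<open>X \<subseteq> R\<close> \<open>\<alpha> \<in> X\<close> X_neg by blast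
      then have "v (vneg \<alpha>) \<in> P"
        using assms(4) by blast
      then have "vneg \<beta> \<in> P"
        unfolding neg \<open>\<beta> = v \<alpha>\<close> .
      then show False
        using vneg_pos_notin \<open>\<beta> \<in> P\<close> by blast
    qed
    then show "\<beta> \<in> v ` (P \<inter> X)"
      using \<open>\<alpha> \<in> X\<close> \<open>\<beta> = v \<alpha>\<close> by blast
  qed
qed

lemma weyl_image_pos_inter:
  assumes w: "w \<in> weyl R cor" and "X \<subseteq> R" and "\<And>\<alpha>. \<alpha> \<in> X \<Longrightarrow> vneg \<alpha> \<in> X"
    and "w ` simple_roots (P \<inter> X) \<subseteq> P"
  shows "w ` (P \<inter> X) = P \<inter> w ` X"
proof (rule image_pos_eq)
  note lin = weyl_lin_map[OF root_system w]
  show "w (vneg x) = vneg (w x)" for x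
    using lin by (rule lin_map_vneg)
  show "w ` (P \<inter> X) \<subseteq> P"
    using lin_map_vadd[OF lin] weyl_in_roots[OF root_system w] assms(4) by (rule image_pos_subset_pos)
qed (use assms in auto)

end

section \<open>Integral roots and indecomposable elements\<close>

lemma integral_roots_vneg:
  assumes rs: "root_system R cor" and uminus: "\<And>f. f \<in> Q \<Longrightarrow> (\<lambda>\<xi>. - f \<xi>) \<in> Q"
    and "\<gamma> \<in> integral_roots R cor Q"
  shows "vneg \<gamma> \<in> integral_roots R cor Q"
proof -
  obtain n :: int where "\<gamma> \<in> R" and "(\<lambda>\<xi>. cor \<gamma> \<xi> - of_int n) \<in> Q"
    using assms(3) by (auto simp: integral_roots_def)
  then have "(\<lambda>\<xi>. cor (vneg \<gamma>) \<xi> - of_int (- n)) \<in> Q"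
    using uminus coroot_vneg[OF rs \<open>\<gamma> \<in> R\<close>] by fastforce
  then show ?thesis
    using vneg_in_roots[OF rs \<open>\<gamma> \<in> R\<close>] unfolding integral_roots_def by blast
qed

lemma prime_ideal_uminus: "prime_ideal Q \<Longrightarrow> f \<in> Q \<Longrightarrow> (\<lambda>\<xi>. - f \<xi>) \<in> Q"
proof -
  assume "prime_ideal Q" and "f \<in> Q"
  then have "\<forall>f\<in>Q. \<forall>g\<in>polyfun. (\<lambda>\<xi>. g \<xi> * f \<xi>) \<in> Q"
    unfolding prime_ideal_def by blast
  from this[rule_format, OF \<open>f \<in> Q\<close> polyfun.pf_const[of "-1"]]
  have "(\<lambda>\<xi>. -1 * f \<xi>) \<in> Q" .
  then show ?thesis by simp
qed

lemma positive_systemE: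
  assumes "root_system R cor" and "positive_system R P"
  obtains B where "based_positive_system R cor P B"
  using assms unfolding positive_system_def based_positive_system_def by blast

lemma integral_roots_dotf_image:
  assumes rs: "root_system R cor" and "positive_system R P" and w: "w \<in> weyl R cor"
  shows "integral_roots R cor (dotf P w ` Q) = w ` integral_roots R cor Q"
proof -
  obtain B where "based_positive_system R cor P B"
    using positive_systemE[OF rs assms(2)] .
  then interpret based_positive_system R cor P B .
  define k where "k \<gamma> = cor (w \<gamma>) (rho P) - cor \<gamma> (rho P)" for \<gamma>
  have k_Ints: "k \<gamma> \<in> \<int>" if "\<gamma> \<in> R" for \<gamma>
    using coroot_rho_diff_Ints[OF w weyl_in_roots[OF rs w that]] weyl_coroot[OF rs w that]
    by (simp add: k_def)
  have shift: "dotf P w (\<lambda>\<xi>. cor \<gamma> \<xi> - c) = (\<lambda>\<xi>. cor (w \<gamma>) \<xi> - (c - k \<gamma>))"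
    if "\<gamma> \<in> R" for \<gamma> c
    using dotf_coroot[OF rs w that] by (simp add: k_def)
  show ?thesis
  proof (intro equalityI subsetI)
    fix \<alpha> assume "\<alpha> \<in> integral_roots R cor (dotf P w ` Q)"
    then obtain n :: int and f where "\<alpha> \<in> R" "f \<in> Q"
      and f: "(\<lambda>\<xi>. cor \<alpha> \<xi> - of_int n) = dotf P w f"
      by (auto simp: integral_roots_def)
    obtain \<gamma> where "\<gamma> \<in> R" and "\<alpha> = w \<gamma>"
      using \<open>\<alpha> \<in> R\<close> weyl_image_roots[OF rs w] by blast
    obtain m :: int where m: "k \<gamma> = of_int m"
      using k_Ints[OF \<open>\<gamma> \<in> R\<close>] by (auto elim: Ints_cases)
    have "dotf P w (\<lambda>\<xi>. cor \<gamma> \<xi> - of_int (n + m)) = dotf P w f"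
      using shift[OF \<open>\<gamma> \<in> R\<close>] f[symmetric] m \<open>\<alpha> = w \<gamma>\<close> by simp
    then have "(\<lambda>\<xi>. cor \<gamma> \<xi> - of_int (n + m)) \<in> Q"
      using inj_dotf[OF bij_is_inj[OF weyl_bij[OF rs w]]] \<open>f \<in> Q\<close> by (simp add: inj_eq)
    then show "\<alpha> \<in> w ` integral_roots R cor Q"
      using \<open>\<gamma> \<in> R\<close> \<open>\<alpha> = w \<gamma>\<close> unfolding integral_roots_def by blast
  next
    fix \<alpha> assume "\<alpha> \<in> w ` integral_roots R cor Q"
    then obtain \<gamma> n where "\<gamma> \<in> R" "\<alpha> = w \<gamma>" and in_Q: "(\<lambda>\<xi>. cor \<gamma> \<xi> - of_int n) \<in> Q"
      by (auto simp: integral_roots_def)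
    obtain m :: int where "k \<gamma> = of_int m"
      using k_Ints[OF \<open>\<gamma> \<in> R\<close>] by (auto elim: Ints_cases)
    then have "dotf P w (\<lambda>\<xi>. cor \<gamma> \<xi> - of_int n) = (\<lambda>\<xi>. cor \<alpha> \<xi> - of_int (n - m))"
      using shift[OF \<open>\<gamma> \<in> R\<close>] \<open>\<alpha> = w \<gamma>\<close> by simp
    then have "(\<lambda>\<xi>. cor \<alpha> \<xi> - of_int (n - m)) \<in> dotf P w ` Q"
      by (rule image_eqI[OF sym in_Q])
    then show "\<alpha> \<in> integral_roots R cor (dotf P w ` Q)"
      using weyl_in_roots[OF rs w \<open>\<gamma> \<in> R\<close>] \<open>\<alpha> = w \<gamma>\<close> unfolding integral_roots_def by blast
  qed
qed

lemma simple_roots_image: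
  assumes "inj v" and add: "\<And>x y. v (vadd x y) = vadd (v x) (v y)"
  shows "simple_roots (v ` X) = v ` simple_roots X"
proof (intro equalityI subsetI)
  fix y assume y: "y \<in> simple_roots (v ` X)"
  then obtain \<alpha> where "\<alpha> \<in> X" and "y = v \<alpha>"
    unfolding simple_roots_def by blast
  have "\<alpha> \<noteq> vadd \<beta> \<gamma>" if "\<beta> \<in> X" "\<gamma> \<in> X" for \<beta> \<gamma>
  proof
    assume "\<alpha> = vadd \<beta> \<gamma>"
    then have "y = vadd (v \<beta>) (v \<gamma>)"
      using \<open>y = v \<alpha>\<close> add by simp
    then show False
      using y that unfolding simple_roots_def by blast
  qed
  then show "y \<in> v ` simple_roots X"
    using \<open>\<alpha> \<in> X\<close> \<open>y = v \<alpha>\<close> unfolding simple_roots_def by blast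
next
  fix y assume "y \<in> v ` simple_roots X"
  then obtain \<alpha> where \<alpha>: "\<alpha> \<in> simple_roots X" and "y = v \<alpha>"
    by blast
  have "y \<noteq> vadd (v \<beta>) (v \<gamma>)" if "\<beta> \<in> X" "\<gamma> \<in> X" for \<beta> \<gamma>
  proof
    assume "y = vadd (v \<beta>) (v \<gamma>)"
    then have "\<alpha> = vadd \<beta> \<gamma>"
      using \<open>y = v \<alpha>\<close> \<open>inj v\<close> by (simp add: add[symmetric] inj_eq)
    then show False
      using \<alpha> that unfolding simple_roots_def by blast
  qed
  then show "y \<in> simple_roots (v ` X)"
    using \<alpha> \<open>y = v \<alpha>\<close> unfolding simple_roots_def by blast
qed

lemma weyl_simple_roots_image:
  assumes "root_system R cor" and "w \<in> weyl R cor"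
  shows "simple_roots (w ` X) = w ` simple_roots X"
  using bij_is_inj[OF weyl_bij[OF assms]] lin_map_vadd[OF weyl_lin_map[OF assms]]
  by (rule simple_roots_image)

theorem mainTheorem18:
  fixes R :: "('i::finite \<Rightarrow> 'a::field_char_0) set"
    and cor :: "('i \<Rightarrow> 'a) \<Rightarrow> ('i \<Rightarrow> 'a) \<Rightarrow> 'a"
    and P :: "('i \<Rightarrow> 'a) set"
    and \<Omega> \<Omega>\<^sub>1 :: "(('i \<Rightarrow> 'a) \<Rightarrow> 'a) set"
    and v u :: "('i \<Rightarrow> 'a) \<Rightarrow> ('i \<Rightarrow> 'a)"
  assumes "alg_closed TYPE('a)"
    and "root_system R cor"
    and "positive_system R P"
    and "prime_ideal \<Omega>"
    and "prime_ideal \<Omega>\<^sub>1"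
    and "\<Omega>\<^sub>1 = dotf P v ` \<Omega>"
    and "v \<in> W_lam R cor P \<Omega>"
  shows "B_lam R cor P \<Omega>\<^sub>1 = v ` B_lam R cor P \<Omega>
     \<and> (u \<in> W_lam R cor P \<Omega>\<^sub>1 \<longrightarrow> u \<circ> v \<in> W_lam R cor P \<Omega>)"
proof -
  note rs = \<open>root_system R cor\<close>
  obtain B where "based_positive_system R cor P B"
    using positive_systemE[OF rs \<open>positive_system R P\<close>] .
  then interpret based_positive_system R cor P B .
  define X where "X = integral_roots R cor \<Omega>"
  have v: "v \<in> weyl R cor" and "v ` simple_roots (P \<inter> X) \<subseteq> P"
    using \<open>v \<in> W_lam R cor P \<Omega>\<close> by (auto simp: W_lam_def B_lam_def X_def)
  have integral_roots_eq: "integral_roots R cor \<Omega>\<^sub>1 = v ` X"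
    unfolding \<open>\<Omega>\<^sub>1 = dotf P v ` \<Omega>\<close> X_def
    using integral_roots_dotf_image[OF rs \<open>positive_system R P\<close> v] .
  have pos_eq: "v ` (P \<inter> X) = P \<inter> v ` X"
  proof (rule weyl_image_pos_inter[OF v])
    show "X \<subseteq> R"
      by (auto simp: X_def integral_roots_def)
    show "vneg \<alpha> \<in> X" if "\<alpha> \<in> X" for \<alpha>
      using integral_roots_vneg[OF rs prime_ideal_uminus[OF \<open>prime_ideal \<Omega>\<close>]] that
      by (simp add: X_def)
  qed fact
  have B_eq: "B_lam R cor P \<Omega>\<^sub>1 = v ` B_lam R cor P \<Omega>"
    unfolding B_lam_def integral_roots_eq X_def[symmetric] pos_eq[symmetric]
    by (rule weyl_simple_roots_image[OF rs v])
  moreover have "u \<circ> v \<in> W_lam R cor P \<Omega>" if "u \<in> W_lam R cor P \<Omega>\<^sub>1"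
    using that B_eq weyl_comp[OF _ v] by (auto simp: W_lam_def image_comp)
  ultimately show ?thesis by blast
qed

end
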